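(* Let $\Omega\subset\mathbb R^n$ be a properly convex quasi-homogeneous affine domain, and let $L$ be the linear subspace spanned by the asymptotic cone $\mathrm{AC}(\Omega)$. Then $\Omega$ admits a parallel foliation by cosets of its asymptotic cone: for every $x\in\Omega$, the section $\Omega_x=\Omega\cap(x+L)$ is a translate of the asymptotic cone of $\Omega$ (more precisely, $\overline{\Omega_x}=p+\mathrm{AC}(\Omega)$ for some point $p$).
   Context: An affine domain is a connected open subset $\Omega\subset\mathbb R^n$; it is quasi-homogeneous if there are a compact $K\subset\Omega$ and a subgroup $G$ of the group of affine transformations preserving $\Omega$ with $GK=\Omega$. A convex affine domain is properly convex if it contains no complete affine line. The asymptotic cone is $\mathrm{AC}(\Omega)=\{u\in\mathbb R^n\mid x+tu\in\Omega\ \text{for all}\ x\in\Omega,\ t\ge0\}$. *)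

theory Defs
  imports "HOL-Analysis.Analysis"
begin

definition affine_transformation :: "('a::euclidean_space \<Rightarrow> 'a) \<Rightarrow> bool" where
  "affine_transformation f \<longleftrightarrow> (\<exists>A b. linear A \<and> bij A \<and> (\<forall>x. f x = A x + b))"

definition affine_domain :: "'a::euclidean_space set \<Rightarrow> bool" where
  "affine_domain \<Omega> \<longleftrightarrow> open \<Omega> \<and> connected \<Omega> \<and> \<Omega> \<noteq> {}"

definition affine_group_preserving :: "('a::euclidean_space \<Rightarrow> 'a) set \<Rightarrow> 'a set \<Rightarrow> bool" where
  "affine_group_preserving G \<Omega> \<longleftrightarrow>
     id \<in> G \<and> (\<forall>f\<in>G. \<forall>g\<in>G. f \<circ> g \<in> G) \<and> (\<forall>g\<in>G. inv g \<in> G) \<and>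
     (\<forall>g\<in>G. affine_transformation g \<and> g ` \<Omega> = \<Omega>)"

definition quasi_homogeneous :: "'a::euclidean_space set \<Rightarrow> bool" where
  "quasi_homogeneous \<Omega> \<longleftrightarrow> affine_domain \<Omega> \<and>
     (\<exists>K G. compact K \<and> K \<subseteq> \<Omega> \<and> affine_group_preserving G \<Omega> \<and> (\<Union>g\<in>G. g ` K) = \<Omega>)"

definition properly_convex :: "'a::euclidean_space set \<Rightarrow> bool" where
  "properly_convex \<Omega> \<longleftrightarrow> convex \<Omega> \<and> \<not> (\<exists>x v. v \<noteq> 0 \<and> (\<forall>t::real. x + t *\<^sub>R v \<in> \<Omega>))"

definition asymptotic_cone :: "'a::euclidean_space set \<Rightarrow> 'a set" where
  "asymptotic_cone \<Omega> = {u. \<forall>x\<in>\<Omega>. \<forall>t::real. t \<ge> 0 \<longrightarrow> x + t *\<^sub>R u \<in> \<Omega>}"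

end

theory Submission
  imports Defs
begin

text \<open>
  Let C be the asymptotic cone of \<Omega>, L its span and F the closure of the fiber
  \<Omega> \<inter> (x + L). As \<Omega> contains no line, C is a pointed closed convex cone, so some linear
  functional a satisfies a \<bullet> w \<ge> \<mu> * norm w on C. Its sublevel sets in the closure of \<Omega> are
  bounded, hence a attains its minimum on F at a point q, and q + C \<subseteq> F.

  Conversely let q + v \<in> F. The points q + \<epsilon> (x - q + c0), with c0 in the relative interior
  of C, lie in \<Omega> and are moved into the compact set K by automorphisms whose linear parts Q
  preserve C. Because q minimises a on the fiber and K is compact, \<epsilon> Q is bi-Lipschitz on L
  with constants independent of \<epsilon>. Blowing up the segment from q to q + v by these
  automorphisms and letting \<epsilon> tend to 0 produces rays in the closure of \<Omega>, hence a
  direction w0 \<in> C as a limit of \<epsilon> Q v; pulling w0 back gives points of C converging to v.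
\<close>

section \<open>Convex cones\<close>

lemma convex_cone_sum:
  assumes "convex_cone S" "\<And>i. i \<in> I \<Longrightarrow> f i \<in> S"
  shows "sum f I \<in> S"
  using assms(2)
proof (induction I rule: infinite_finite_induct)
  case (insert i I)
  then show ?case by (simp add: convex_cone_add[OF assms(1)])
qed (simp_all add: convex_cone_contains_0[OF assms(1)])

lemma zero_notin_convex_hull_pointed_cone_sphere:
  assumes "convex_cone C" and pointed: "\<And>u. u \<in> C \<Longrightarrow> - u \<in> C \<Longrightarrow> u = 0"
  shows "0 \<notin> convex hull (C \<inter> sphere 0 1)"
proof
  assume "0 \<in> convex hull (C \<inter> sphere 0 1)"
  then obtain V u where V: "finite V" "V \<subseteq> C \<inter> sphere 0 1" "\<forall>v\<in>V. 0 \<le> u v"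
    "sum u V = 1" "(\<Sum>v\<in>V. u v *\<^sub>R v) = 0"
    unfolding convex_hull_explicit by blast
  then obtain v0 where v0: "v0 \<in> V" "u v0 > 0"
    using sum_nonpos[of V u] by force
  have "(\<Sum>v\<in>V. u v *\<^sub>R v) = u v0 *\<^sub>R v0 + (\<Sum>v\<in>V - {v0}. u v *\<^sub>R v)"
    using V(1) v0(1) by (simp add: sum.remove)
  then have "- (u v0 *\<^sub>R v0) = (\<Sum>v\<in>V - {v0}. u v *\<^sub>R v)"
    using V(5) by (metis minus_unique)
  also have "\<dots> \<in> C"
    using V by (intro convex_cone_sum[OF assms(1)] convex_cone_scaleR[OF assms(1)]) auto
  finally have "- (u v0 *\<^sub>R v0) \<in> C" .
  moreover have "u v0 *\<^sub>R v0 \<in> C"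
    using V v0 by (intro convex_cone_scaleR[OF assms(1)]) auto
  ultimately have "u v0 *\<^sub>R v0 = 0"
    using pointed by blast
  then show False
    using v0 V(2) by auto
qed

lemma pointed_convex_cone_positive_functional:
  fixes C :: "'a::euclidean_space set"
  assumes "closed C" "convex_cone C" and pointed: "\<And>u. u \<in> C \<Longrightarrow> - u \<in> C \<Longrightarrow> u = 0"
  obtains a \<mu> where "\<mu> > 0" "\<And>w. w \<in> C \<Longrightarrow> \<mu> * norm w \<le> a \<bullet> w"
proof -
  let ?S = "convex hull (C \<inter> sphere 0 1)"
  have "compact ?S"
    using assms(1) by (intro compact_convex_hull closed_Int_compact compact_sphere)
  then obtain a b where "0 < b" and b: "\<And>x. x \<in> ?S \<Longrightarrow> b < a \<bullet> x"
    using separating_hyperplane_closed_0[of ?S] zero_notin_convex_hull_pointed_cone_sphere[OF assms(2) pointed]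
    by (auto dest: compact_imp_closed)
  have "b * norm w \<le> a \<bullet> w" if "w \<in> C" for w
  proof (cases "w = 0")
    case False
    have "(1 / norm w) *\<^sub>R w \<in> ?S"
      using that False by (intro hull_inc) (simp add: convex_cone_scaleR[OF assms(2)])
    then have "b < a \<bullet> ((1 / norm w) *\<^sub>R w)"
      using b by blast
    then show ?thesis
      using False by (simp add: field_simps)
  qed simp
  then show thesis
    using that \<open>0 < b\<close> by blast
qed

lemma convex_cone_relative_interior_ball:
  fixes C :: "'a::euclidean_space set"
  assumes "convex_cone C"
  obtains c0 \<rho> where "c0 \<in> C" "\<rho> > 0" "\<And>u. u \<in> span C \<Longrightarrow> norm u \<le> \<rho> \<Longrightarrow> c0 + u \<in> C"
proof -
  have "rel_interior C \<noteq> {}"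
    using assms by (simp add: convex_cone_def rel_interior_eq_empty)
  then obtain c0 where "c0 \<in> rel_interior C"
    by blast
  then obtain e where c0: "c0 \<in> C" "e > 0" and ball: "ball c0 e \<inter> affine hull C \<subseteq> C"
    unfolding mem_rel_interior_ball by blast
  have "affine hull C = span C"
    using convex_cone_contains_0[OF assms] by (intro affine_hull_span_0 hull_inc)
  then have "c0 + u \<in> C" if "u \<in> span C" "norm u \<le> e / 2" for u
  proof -
    have "c0 + u \<in> span C"
      using that c0 by (simp add: span_add span_base)
    moreover have "c0 + u \<in> ball c0 e"
      using that c0 by (simp add: dist_norm)
    ultimately show ?thesis
      using ball \<open>affine hull C = span C\<close> by blast
  qed
  then show thesis using that[of c0 "e / 2"] c0 by simp
qed

lemma norm_linear_le_on_span_of_conic: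
  fixes T :: "'a::real_normed_vector \<Rightarrow> 'b::real_normed_vector"
  assumes "linear T" "conic C" "\<rho> > 0"
    and ball: "\<And>u. u \<in> span C \<Longrightarrow> norm u \<le> \<rho> \<Longrightarrow> c0 + u \<in> C"
    and bound: "\<And>w. w \<in> C \<Longrightarrow> c0 - w \<in> C \<Longrightarrow> norm (T w) \<le> B"
    and "w \<in> span C"
  shows "norm (T w) \<le> 2 * B / \<rho> * norm w"
proof (cases "w = 0")
  case True
  then show ?thesis using linear_0[OF assms(1)] by simp
next
  case False
  define s where "s = \<rho> / norm w"
  have s: "s > 0" "norm (s *\<^sub>R w) = \<rho>"
    using False assms(3) by (auto simp: s_def)
  \<comment> \<open>s w = w1 - w2 with w1 + w2 = c0, and both lie in the order interval below c0\<close>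
  define w1 where "w1 = (1/2) *\<^sub>R (c0 + s *\<^sub>R w)"
  define w2 where "w2 = (1/2) *\<^sub>R (c0 - s *\<^sub>R w)"
  have "c0 + s *\<^sub>R w \<in> C" "c0 + - (s *\<^sub>R w) \<in> C"
    using ball[of "s *\<^sub>R w"] ball[of "- (s *\<^sub>R w)"] s assms(6) by (auto intro: span_scale span_neg)
  then have "w1 \<in> C" "w2 \<in> C"
    unfolding w1_def w2_def by (auto intro: conicD[OF assms(2)])
  moreover have "c0 - w1 = w2" "c0 - w2 = w1"
    by (simp_all add: w1_def w2_def algebra_simps flip: scaleR_add_left)
  ultimately have "norm (T w1) \<le> B" "norm (T w2) \<le> B"
    using bound by auto
  moreover have "T w1 - T w2 = s *\<^sub>R T w"
    using assms(1)
    by (simp add: w1_def w2_def linear_diff linear_add linear_scale algebra_simps flip: scaleR_add_left)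
  ultimately have "s * norm (T w) \<le> 2 * B"
    using norm_triangle_ineq4[of "T w1" "T w2"] s(1) by simp
  then show ?thesis using s(1) False by (simp add: s_def field_simps)
qed

lemma convex_ray_shorten:
  assumes "convex S" "z \<in> S" "z + s *\<^sub>R d \<in> S" "0 \<le> t" "t \<le> s"
  shows "z + t *\<^sub>R d \<in> S"
proof (cases "s = 0")
  case False
  then have "z + t *\<^sub>R d = (1 - t / s) *\<^sub>R z + (t / s) *\<^sub>R (z + s *\<^sub>R d)"
    by (simp add: algebra_simps)
  then show ?thesis
    using convexD_alt[OF assms(1-3), of "t / s"] assms(4,5) False by simp
qed (use assms in simp)

lemma unbounded_closed_convex_ray:
  fixes S :: "'a::euclidean_space set"
  assumes "closed S" "convex S" "\<not> bounded S" "z \<in> S"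
  obtains d where "norm d = 1" "\<And>t. 0 \<le> t \<Longrightarrow> z + t *\<^sub>R d \<in> S"
proof -
  define D where "D n = sphere 0 1 \<inter> (\<lambda>d. z + real n *\<^sub>R d) -` S" for n :: nat
  have "compact (D n)" for n
    unfolding D_def
    by (intro compact_Int_closed compact_sphere continuous_closed_vimage assms(1) continuous_intros)
  moreover have "D n \<noteq> {}" for n
  proof -
    obtain f where f: "f \<in> S" "real n + norm z < norm f"
      using assms(3) unfolding bounded_iff by (meson not_le)
    then have far: "real n < norm (f - z)"
      using norm_triangle_ineq2[of f z] by linarith
    define d where "d = (1 / norm (f - z)) *\<^sub>R (f - z)"
    have "z + norm (f - z) *\<^sub>R d = f"
      using far by (auto simp: d_def)
    then have "z + real n *\<^sub>R d \<in> S"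
      using convex_ray_shorten[OF assms(2,4), of "norm (f - z)" d "real n"] f(1) far by simp
    moreover have "norm d = 1"
      using far by (auto simp: d_def)
    ultimately show ?thesis
      by (auto simp: D_def)
  qed
  moreover have "D n \<subseteq> D m" if "m \<le> n" for m n
  proof
    fix d
    assume "d \<in> D n"
    then show "d \<in> D m"
      using convex_ray_shorten[OF assms(2,4), of "real n" d "real m"] that by (simp add: D_def)
  qed
  ultimately have "\<Inter> (range D) \<noteq> {}"
    by (rule compact_nest)
  then obtain d where d: "\<And>n. d \<in> D n"
    by blast
  have "z + t *\<^sub>R d \<in> S" if "0 \<le> t" for t
    using convex_ray_shorten[OF assms(2,4), of "real (nat \<lceil>t\<rceil>)" d t] d[of "nat \<lceil>t\<rceil>"] that real_nat_ceiling_ge[of t]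
    by (simp add: D_def)
  moreover have "norm d = 1"
    using d[of 0] by (simp add: D_def)
  ultimately show thesis
    using that by blast
qed

section \<open>Asymptotic cones\<close>

lemma asymptotic_coneI:
  "(\<And>x t. x \<in> \<Omega> \<Longrightarrow> 0 \<le> t \<Longrightarrow> x + t *\<^sub>R u \<in> \<Omega>) \<Longrightarrow> u \<in> asymptotic_cone \<Omega>"
  by (simp add: asymptotic_cone_def)

lemma asymptotic_coneD:
  "u \<in> asymptotic_cone \<Omega> \<Longrightarrow> x \<in> \<Omega> \<Longrightarrow> 0 \<le> t \<Longrightarrow> x + t *\<^sub>R u \<in> \<Omega>"
  by (simp add: asymptotic_cone_def)

lemma add_asymptotic_cone_mem: "x \<in> \<Omega> \<Longrightarrow> u \<in> asymptotic_cone \<Omega> \<Longrightarrow> x + u \<in> \<Omega>"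
  using asymptotic_coneD[of u \<Omega> x 1] by simp

lemma convex_cone_asymptotic_cone: "convex_cone (asymptotic_cone \<Omega>)"
  unfolding convex_cone_iff
proof (intro conjI ballI allI impI)
  show "0 \<in> asymptotic_cone \<Omega>"
    by (rule asymptotic_coneI) simp
  show "u + w \<in> asymptotic_cone \<Omega>" if "u \<in> asymptotic_cone \<Omega>" "w \<in> asymptotic_cone \<Omega>" for u w
  proof (rule asymptotic_coneI)
    fix x and t :: real
    assume "x \<in> \<Omega>" "0 \<le> t"
    then have "(x + t *\<^sub>R u) + t *\<^sub>R w \<in> \<Omega>"
      using that by (intro asymptotic_coneD) auto
    then show "x + t *\<^sub>R (u + w) \<in> \<Omega>"
      by (simp add: algebra_simps)
  qed
  show "c *\<^sub>R u \<in> asymptotic_cone \<Omega>" if "u \<in> asymptotic_cone \<Omega>" "0 \<le> c" for u c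
    using that by (intro asymptotic_coneI) (metis asymptotic_coneD mult_nonneg_nonneg scaleR_scaleR)
qed

lemma conic_asymptotic_cone: "conic (asymptotic_cone \<Omega>)"
  using convex_cone_asymptotic_cone[of \<Omega>] by (simp add: convex_cone_def)

lemma asymptotic_cone_pointed:
  assumes "properly_convex \<Omega>" "\<Omega> \<noteq> {}" "u \<in> asymptotic_cone \<Omega>" "- u \<in> asymptotic_cone \<Omega>"
  shows "u = 0"
proof -
  obtain z where z: "z \<in> \<Omega>"
    using assms(2) by blast
  have "z + t *\<^sub>R u \<in> \<Omega>" for t
    using asymptotic_coneD[OF assms(3) z, of t] asymptotic_coneD[OF assms(4) z, of "- t"]
    by (cases "0 \<le> t") auto
  then show ?thesis
    using assms(1) unfolding properly_convex_def by blast
qed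

lemma asymptotic_coneI_closure:
  fixes \<Omega> :: "'a::euclidean_space set"
  assumes "open \<Omega>" "convex \<Omega>" "z \<in> closure \<Omega>" and ray: "\<And>t. 0 \<le> t \<Longrightarrow> z + t *\<^sub>R d \<in> closure \<Omega>"
  shows "d \<in> asymptotic_cone \<Omega>"
proof (rule asymptotic_coneI)
  fix y and t :: real
  assume y: "y \<in> \<Omega>" and t: "0 \<le> t"
  \<comment> \<open>y + s d is the limit of points on the segments from y to z + (n + 1) s d\<close>
  have "y + s *\<^sub>R d \<in> closure \<Omega>" if "0 \<le> s" for s
  proof (rule closed_sequentially[OF closed_closure])
    let ?e = "\<lambda>n. inverse (real (Suc n))"
    show "(1 - ?e n) *\<^sub>R y + ?e n *\<^sub>R (z + (real (Suc n) * s) *\<^sub>R d) \<in> closure \<Omega>" for n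
      using y closure_subset ray[of "real (Suc n) * s"] that
      by (intro convexD_alt convex_closure assms(2)) (auto simp: field_simps)
    have "(1 - ?e n) *\<^sub>R y + ?e n *\<^sub>R (z + (real (Suc n) * s) *\<^sub>R d)
        = y + s *\<^sub>R d + ?e n *\<^sub>R (z - y)" for n
    proof -
      have "?e n * (real (Suc n) * s) = s"
        by (simp add: field_simps)
      then have "?e n *\<^sub>R ((real (Suc n) * s) *\<^sub>R d) = s *\<^sub>R d"
        by (simp only: scaleR_scaleR)
      then show ?thesis
        by (simp only: scaleR_add_right) (simp add: algebra_simps)
    qed
    moreover have "(\<lambda>n. y + s *\<^sub>R d + ?e n *\<^sub>R (z - y)) \<longlonglongrightarrow> y + s *\<^sub>R d + 0 *\<^sub>R (z - y)"
      by (intro tendsto_intros LIMSEQ_inverse_real_of_nat)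
    ultimately show "(\<lambda>n. (1 - ?e n) *\<^sub>R y + ?e n *\<^sub>R (z + (real (Suc n) * s) *\<^sub>R d)) \<longlonglongrightarrow> y + s *\<^sub>R d"
      by simp
  qed
  \<comment> \<open>y + t d is the midpoint of y \<in> interior and y + 2 t d \<in> closure\<close>
  then have "(y + (2 * t) *\<^sub>R d) - (1/2) *\<^sub>R ((y + (2 * t) *\<^sub>R d) - y) \<in> interior \<Omega>"
    using t y assms(1) by (intro mem_interior_closure_convex_shrink assms(2)) (auto simp: interior_open)
  moreover have "(y + (2 * t) *\<^sub>R d) - (1/2) *\<^sub>R ((y + (2 * t) *\<^sub>R d) - y) = y + t *\<^sub>R d"
    by (simp add: scaleR_diff_left[symmetric] diff_add_eq[symmetric])
  ultimately show "y + t *\<^sub>R d \<in> \<Omega>"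
    using assms(1) by (metis interior_open)
qed

lemma closed_asymptotic_cone:
  fixes \<Omega> :: "'a::euclidean_space set"
  assumes "open \<Omega>" "convex \<Omega>" "\<Omega> \<noteq> {}"
  shows "closed (asymptotic_cone \<Omega>)"
proof -
  obtain z where z: "z \<in> \<Omega>"
    using assms(3) by blast
  have "asymptotic_cone \<Omega> = (\<Inter>t\<in>{0..}. (\<lambda>d. z + t *\<^sub>R d) -` closure \<Omega>)"
    using asymptotic_coneD[of _ \<Omega> z] asymptotic_coneI_closure[OF assms(1,2)] z closure_subset
    by fastforce
  also have "closed \<dots>"
    by (intro closed_INT ballI continuous_closed_vimage closed_closure continuous_intros)
  finally show ?thesis .
qed

lemma bounded_sublevel_closure:
  fixes \<Omega> :: "'a::euclidean_space set"
  assumes "open \<Omega>" "convex \<Omega>" "\<mu> > 0" and pos: "\<And>w. w \<in> asymptotic_cone \<Omega> \<Longrightarrow> \<mu> * norm w \<le> a \<bullet> w"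
  shows "bounded {f \<in> closure \<Omega>. a \<bullet> f \<le> T}"
proof (rule ccontr)
  let ?S = "{f \<in> closure \<Omega>. a \<bullet> f \<le> T}"
  assume unbounded: "\<not> bounded ?S"
  then obtain z where z: "z \<in> ?S"
    by (metis bounded_empty ex_in_conv)
  have "closed ?S" "convex ?S"
    using assms(2) closed_halfspace_le[of a T] convex_halfspace_le[of a T]
    by (auto simp: Collect_conj_eq convex_closure intro: convex_Int)
  then obtain d where d: "norm d = 1" "\<And>t. 0 \<le> t \<Longrightarrow> z + t *\<^sub>R d \<in> ?S"
    using unbounded_closed_convex_ray[OF _ _ unbounded z] by blast
  then have "d \<in> asymptotic_cone \<Omega>"
    using asymptotic_coneI_closure[OF assms(1,2)] z by blast
  then have "\<mu> \<le> a \<bullet> d"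
    using pos d(1) by fastforce
  define t where "t = (T - a \<bullet> z) / \<mu> + 1"
  have "0 \<le> t"
    using z assms(3) by (simp add: t_def)
  then have "a \<bullet> z + t * (a \<bullet> d) \<le> T"
    using d(2) by (simp add: inner_add_right)
  moreover have "t * \<mu> \<le> t * (a \<bullet> d)"
    using \<open>\<mu> \<le> a \<bullet> d\<close> \<open>0 \<le> t\<close> by (rule mult_left_mono)
  moreover have "t * \<mu> = T - a \<bullet> z + \<mu>"
    using assms(3) by (simp add: t_def field_simps)
  ultimately show False
    using assms(3) by linarith
qed

section \<open>Affine automorphisms\<close>

lemma affine_transformationE:
  assumes "affine_transformation g"
  obtains A b where "linear A" "bij A" "g = (\<lambda>x. A x + b)"
  using assms unfolding affine_transformation_def by blast

lemma affine_transformation_inj: "affine_transformation g \<Longrightarrow> inj g"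
  by (auto elim!: affine_transformationE simp: inj_def bij_def)

lemma affine_group_preserving_orbit_meets:
  assumes "affine_group_preserving G \<Omega>" "(\<Union>g\<in>G. g ` K) = \<Omega>" "z \<in> \<Omega>"
  obtains h where "h \<in> G" "h z \<in> K"
proof -
  obtain g y where g: "g \<in> G" "y \<in> K" "z = g y"
    using assms(2,3) by blast
  then have "inv g \<in> G" "affine_transformation g"
    using assms(1) by (simp_all add: affine_group_preserving_def)
  then have "inv g \<in> G" "inj g"
    using affine_transformation_inj by blast+
  then show thesis
    using that[of "inv g"] g by simp
qed

lemma closure_affine_automorphism:
  fixes Q :: "'a::euclidean_space \<Rightarrow> 'a"
  assumes "linear Q" "inj Q" "(\<lambda>z. Q z + b) ` \<Omega> = \<Omega>"
  shows "(\<lambda>z. Q z + b) ` closure \<Omega> = closure \<Omega>"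
proof -
  have decompose: "(\<lambda>z. Q z + b) ` S = (+) b ` Q ` S" for S
    by (auto simp: image_image add.commute)
  have "(\<lambda>z. Q z + b) ` closure \<Omega> = closure ((\<lambda>z. Q z + b) ` \<Omega>)"
    unfolding decompose closure_translation closure_injective_linear_image[OF assms(1,2)] ..
  then show ?thesis
    using assms(3) by simp
qed

lemma asymptotic_cone_affine_image_subset:
  assumes "linear Q" and h: "(\<lambda>z. Q z + b) ` \<Omega> = \<Omega>"
  shows "Q ` asymptotic_cone \<Omega> \<subseteq> asymptotic_cone \<Omega>"
proof
  fix v
  assume "v \<in> Q ` asymptotic_cone \<Omega>"
  then obtain w where w: "w \<in> asymptotic_cone \<Omega>" "v = Q w"
    by blast
  show "v \<in> asymptotic_cone \<Omega>"
  proof (rule asymptotic_coneI)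
    fix x and t :: real
    assume "x \<in> \<Omega>" "0 \<le> t"
    then have "x \<in> (\<lambda>z. Q z + b) ` \<Omega>"
      by (simp only: h)
    then obtain z where z: "z \<in> \<Omega>" "x = Q z + b"
      by blast
    have "z + t *\<^sub>R w \<in> \<Omega>"
      using asymptotic_coneD[OF w(1) z(1) \<open>0 \<le> t\<close>] .
    then have "Q (z + t *\<^sub>R w) + b \<in> (\<lambda>z. Q z + b) ` \<Omega>"
      by (rule imageI)
    moreover have "Q (z + t *\<^sub>R w) + b = x + t *\<^sub>R v"
      using assms(1) z(2) w(2) by (simp add: linear_add linear_scale algebra_simps)
    ultimately show "x + t *\<^sub>R v \<in> \<Omega>"
      by (simp only: h)
  qed
qed

lemma asymptotic_cone_affine_automorphism:
  assumes "linear Q" "bij Q" and h: "(\<lambda>z. Q z + b) ` \<Omega> = \<Omega>"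
  shows "Q ` asymptotic_cone \<Omega> = asymptotic_cone \<Omega>"
proof
  show "Q ` asymptotic_cone \<Omega> \<subseteq> asymptotic_cone \<Omega>"
    using assms(1) h by (rule asymptotic_cone_affine_image_subset)
  have inv: "linear (inv Q)" "\<And>w. inv Q (Q w) = w" "\<And>w. Q (inv Q w) = w"
    using inj_linear_imp_inv_linear[OF assms(1) bij_is_inj[OF assms(2)]] assms(2)
    by (auto simp: bij_is_inj bij_is_surj surj_f_inv_f)
  have "inv Q (Q z + b) + - inv Q b = z" for z
    using inv by (simp add: linear_add[OF inv(1)])
  then have "(\<lambda>z. inv Q z + - inv Q b) ` (\<lambda>z. Q z + b) ` \<Omega> = \<Omega>"
    by (simp add: image_image)
  then have "(\<lambda>z. inv Q z + - inv Q b) ` \<Omega> = \<Omega>"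
    by (simp only: h)
  then have inv_subset: "inv Q ` asymptotic_cone \<Omega> \<subseteq> asymptotic_cone \<Omega>"
    by (rule asymptotic_cone_affine_image_subset[OF inv(1)])
  show "asymptotic_cone \<Omega> \<subseteq> Q ` asymptotic_cone \<Omega>"
  proof
    fix w
    assume "w \<in> asymptotic_cone \<Omega>"
    then have "inv Q w \<in> asymptotic_cone \<Omega>"
      using inv_subset by blast
    then show "w \<in> Q ` asymptotic_cone \<Omega>"
      using inv(3)[of w] by (metis image_eqI)
  qed
qed

lemma closure_fiber_subset:
  fixes L :: "'a::euclidean_space set"
  assumes "subspace L" "f \<in> closure (\<Omega> \<inter> (\<lambda>v. x + v) ` L)"
  shows "f \<in> closure \<Omega>" "f - x \<in> L"
proof -
  have "closed ((+) x ` L)"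
    by (intro closed_translation closed_subspace assms(1))
  then have "f \<in> closure \<Omega> \<inter> (+) x ` L"
    using assms(2) closure_mono[of _ "(+) x ` L"] closure_mono[of _ \<Omega>] closure_closed
    by (metis IntI inf.cobounded1 inf.cobounded2 subsetD)
  then show "f \<in> closure \<Omega>" "f - x \<in> L"
    by auto
qed

lemma closure_fiber_add_asymptotic_cone:
  fixes L :: "'a::euclidean_space set"
  assumes "subspace L" "asymptotic_cone \<Omega> \<subseteq> L"
    and "f \<in> closure (\<Omega> \<inter> (\<lambda>v. x + v) ` L)" "w \<in> asymptotic_cone \<Omega>"
  shows "f + w \<in> closure (\<Omega> \<inter> (\<lambda>v. x + v) ` L)"
proof -
  let ?F = "\<Omega> \<inter> (\<lambda>v. x + v) ` L"
  have "(+) w ` ?F \<subseteq> ?F"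
  proof
    fix y
    assume "y \<in> (+) w ` ?F"
    then obtain v where "x + v \<in> \<Omega>" "v \<in> L" "y = w + (x + v)"
      by blast
    moreover have "w + v \<in> L"
      using assms(1,2,4) \<open>v \<in> L\<close> by (auto intro: subspace_add)
    ultimately show "y \<in> ?F"
      using add_asymptotic_cone_mem[OF _ assms(4), of "x + v"]
      by (auto simp: algebra_simps intro!: image_eqI[of _ _ "w + v"])
  qed
  then have "(+) w ` closure ?F \<subseteq> closure ?F"
    by (metis closure_mono closure_translation)
  then show ?thesis
    using assms(3) by (auto simp: add.commute)
qed

lemma closed_inner_attains_min:
  fixes S :: "'a::euclidean_space set"
  assumes "closed S" "x \<in> S" "bounded {f \<in> S. a \<bullet> f \<le> a \<bullet> x}"
  obtains q where "q \<in> S" "\<And>f. f \<in> S \<Longrightarrow> a \<bullet> q \<le> a \<bullet> f"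
proof -
  let ?S = "{f \<in> S. a \<bullet> f \<le> a \<bullet> x}"
  have "closed ?S"
    using assms(1) closed_halfspace_le[of a "a \<bullet> x"] by (simp add: Collect_conj_eq closed_Int)
  then have "compact ?S"
    using assms(3) by (simp add: compact_eq_bounded_closed)
  moreover have "?S \<noteq> {}"
    using assms(2) by blast
  moreover have "continuous_on ?S (\<lambda>f. a \<bullet> f)"
    by (intro continuous_intros)
  ultimately have "\<exists>q\<in>?S. \<forall>f\<in>?S. a \<bullet> q \<le> a \<bullet> f"
    by (rule continuous_attains_inf)
  then obtain q where q: "q \<in> ?S" and min: "\<forall>f\<in>?S. a \<bullet> q \<le> a \<bullet> f"
    by blast
  have "a \<bullet> q \<le> a \<bullet> f" if "f \<in> S" for f
  proof (cases "a \<bullet> f \<le> a \<bullet> x")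
    case True
    then show ?thesis
      using min that by blast
  next
    case False
    then show ?thesis
      using q by simp
  qed
  then show thesis
    using that q(1) by blast
qed

section \<open>Rescaling\<close>

lemma closed_ray_limit:
  fixes S :: "'a::real_normed_vector set"
  assumes "closed S" "z \<longlonglongrightarrow> z0" "d \<longlonglongrightarrow> d0"
    and rays: "\<And>k \<tau>. 0 \<le> \<tau> \<Longrightarrow> \<tau> \<le> real k \<Longrightarrow> z k + \<tau> *\<^sub>R d k \<in> S" and "0 \<le> \<tau>"
  shows "z0 + \<tau> *\<^sub>R d0 \<in> S"
proof (rule Lim_in_closed_set[OF assms(1)])
  have "z k + \<tau> *\<^sub>R d k \<in> S" if "nat \<lceil>\<tau>\<rceil> \<le> k" for k
  proof -
    have "\<tau> \<le> real k"
      using that real_nat_ceiling_ge[of \<tau>] by (meson of_nat_le_iff order_trans)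
    then show ?thesis
      by (rule rays[OF \<open>0 \<le> \<tau>\<close>])
  qed
  then show "\<forall>\<^sub>F k in sequentially. z k + \<tau> *\<^sub>R d k \<in> S"
    by (rule eventually_sequentiallyI)
  show "(\<lambda>k. z k + \<tau> *\<^sub>R d k) \<longlonglongrightarrow> z0 + \<tau> *\<^sub>R d0"
    using assms(2,3) by (intro tendsto_intros)
qed simp

lemma closed_cone_mem_of_uniformly_injective:
  fixes C :: "'a::real_normed_vector set"
  assumes "closed C" "\<And>k. linear (A k)" "\<And>k. C \<subseteq> A k ` C"
    and lower: "\<And>k w. w \<in> span C \<Longrightarrow> norm w \<le> \<kappa> * norm (A k w)"
    and "v \<in> span C" "(\<lambda>k. A k v) \<longlonglongrightarrow> w0" "w0 \<in> C"
  shows "v \<in> C"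
proof -
  have "\<forall>k. \<exists>u. u \<in> C \<and> A k u = w0"
  proof
    fix k
    have "w0 \<in> A k ` C"
      using assms(3,7) by (rule subsetD)
    then show "\<exists>u. u \<in> C \<and> A k u = w0"
      by (auto simp: image_iff)
  qed
  then obtain u where u: "\<And>k. u k \<in> C" "\<And>k. A k (u k) = w0"
    using choice[of "\<lambda>k u. u \<in> C \<and> A k u = w0"] by blast
  have "norm (u k - v) \<le> \<kappa> * norm (w0 - A k v)" for k
  proof -
    have "u k - v \<in> span C"
      by (rule span_diff[OF span_base[OF u(1)] assms(5)])
    moreover have "A k (u k - v) = w0 - A k v"
      using u by (simp add: linear_diff[OF assms(2)])
    ultimately show ?thesis
      using lower[of "u k - v" k] by simp
  qed
  moreover have "(\<lambda>k. \<kappa> * norm (w0 - A k v)) \<longlonglongrightarrow> \<kappa> * norm (w0 - w0)"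
    using assms(6) by (intro tendsto_intros)
  ultimately have "(\<lambda>k. u k - v) \<longlonglongrightarrow> 0"
    using Lim_null_comparison[OF always_eventually, of "\<lambda>k. u k - v" "\<lambda>k. \<kappa> * norm (w0 - A k v)"]
    by simp
  then have "u \<longlonglongrightarrow> v"
    by (rule LIM_zero_cancel)
  with u(1) show ?thesis
    by (rule closed_sequentially[OF assms(1)])
qed

lemma conic_subset_scaled_image:
  assumes "conic C" "Q ` C = C" "t > 0"
  shows "C \<subseteq> (\<lambda>w. t *\<^sub>R Q w) ` C"
proof
  fix w
  assume "w \<in> C"
  then have "(1 / t) *\<^sub>R w \<in> Q ` C"
    using assms by (simp add: conicD)
  then obtain u where "u \<in> C" "Q u = (1 / t) *\<^sub>R w"
    by (metis imageE)
  then show "w \<in> (\<lambda>w. t *\<^sub>R Q w) ` C"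
    using assms(3) by (auto intro!: image_eqI[of _ _ u])
qed

text \<open>The maps f \<mapsto> y + Q (f - (q + \<epsilon> c)) blow up \<Omega> around q by a factor of order
  1/\<epsilon>, uniformly in \<epsilon>, while keeping the image of q + \<epsilon> c inside K.\<close>

definition rescaling_family :: "'a::euclidean_space set \<Rightarrow> 'a set \<Rightarrow> 'a \<Rightarrow> 'a \<Rightarrow> bool" where
  "rescaling_family \<Omega> K q c \<longleftrightarrow> (\<exists>\<kappa> \<kappa>'. \<forall>\<epsilon>. 0 < \<epsilon> \<and> \<epsilon> \<le> 1 \<longrightarrow>
     (\<exists>y Q. y \<in> K \<and> linear Q \<and> Q ` asymptotic_cone \<Omega> = asymptotic_cone \<Omega>
        \<and> (\<forall>f\<in>closure \<Omega>. y + Q (f - (q + \<epsilon> *\<^sub>R c)) \<in> closure \<Omega>)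
        \<and> (\<forall>w\<in>span (asymptotic_cone \<Omega>).
             \<epsilon> * norm (Q w) \<le> \<kappa> * norm w \<and> norm w \<le> \<kappa>' * \<epsilon> * norm (Q w))))"

lemma rescaling_family_seqE:
  assumes "rescaling_family \<Omega> K q c"
  obtains Y Q \<kappa> \<kappa>' where "\<And>k. Y k \<in> K" "\<And>k. linear (Q k)"
    "\<And>k. Q k ` asymptotic_cone \<Omega> = asymptotic_cone \<Omega>"
    "\<And>k f. f \<in> closure \<Omega> \<Longrightarrow> Y k + Q k (f - (q + inverse (real (Suc k)) *\<^sub>R c)) \<in> closure \<Omega>"
    "\<And>k w. w \<in> span (asymptotic_cone \<Omega>) \<Longrightarrow> inverse (real (Suc k)) * norm (Q k w) \<le> \<kappa> * norm w"
    "\<And>k w. w \<in> span (asymptotic_cone \<Omega>) \<Longrightarrow> norm w \<le> \<kappa>' * inverse (real (Suc k)) * norm (Q k w)"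
proof -
  let ?C = "asymptotic_cone \<Omega>"
  obtain \<kappa> \<kappa>' where fam: "\<forall>e. 0 < e \<and> e \<le> 1 \<longrightarrow> (\<exists>y Q. y \<in> K \<and> linear Q \<and> Q ` ?C = ?C
      \<and> (\<forall>f\<in>closure \<Omega>. y + Q (f - (q + e *\<^sub>R c)) \<in> closure \<Omega>)
      \<and> (\<forall>w\<in>span ?C. e * norm (Q w) \<le> \<kappa> * norm w \<and> norm w \<le> \<kappa>' * e * norm (Q w)))"
    using assms unfolding rescaling_family_def by blast
  have "0 < inverse (real (Suc k)) \<and> inverse (real (Suc k)) \<le> 1" for k
    by (simp add: field_simps)
  then have "\<forall>k. \<exists>y Q. y \<in> K \<and> linear Q \<and> Q ` ?C = ?C
      \<and> (\<forall>f\<in>closure \<Omega>. y + Q (f - (q + inverse (real (Suc k)) *\<^sub>R c)) \<in> closure \<Omega>)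
      \<and> (\<forall>w\<in>span ?C. inverse (real (Suc k)) * norm (Q w) \<le> \<kappa> * norm w
          \<and> norm w \<le> \<kappa>' * inverse (real (Suc k)) * norm (Q w))"
    using fam by blast
  then show thesis
    using that[of _ _ \<kappa> \<kappa>'] by metis
qed

lemma rescaled_rays_asymptotic_limit:
  fixes \<Omega> :: "'a::euclidean_space set"
  assumes "open \<Omega>" "convex \<Omega>" "bounded (range Z)" "bounded (range V)"
    and rays: "\<And>k \<tau>. 0 \<le> \<tau> \<Longrightarrow> \<tau> \<le> real k \<Longrightarrow> Z k + \<tau> *\<^sub>R V k \<in> closure \<Omega>"
  obtains r w0 where "strict_mono r" "(\<lambda>k. V (r k)) \<longlonglongrightarrow> w0" "w0 \<in> asymptotic_cone \<Omega>"
proof -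
  have "bounded (range (\<lambda>k. (Z k, V k)))"
    using bounded_Times[OF assms(3,4)] by (rule bounded_subset) auto
  then obtain r l where r: "strict_mono r" and lim: "((\<lambda>k. (Z k, V k)) \<circ> r) \<longlonglongrightarrow> l"
    using bounded_imp_convergent_subsequence by blast
  have Z: "(\<lambda>k. Z (r k)) \<longlonglongrightarrow> fst l" and V: "(\<lambda>k. V (r k)) \<longlonglongrightarrow> snd l"
    using tendsto_fst[OF lim] tendsto_snd[OF lim] by (simp_all add: comp_def)
  have "fst l + \<tau> *\<^sub>R snd l \<in> closure \<Omega>" if "0 \<le> \<tau>" for \<tau>
  proof (rule closed_ray_limit[OF closed_closure Z V _ that])
    show "Z (r k) + \<tau> *\<^sub>R V (r k) \<in> closure \<Omega>" if "0 \<le> \<tau>" "\<tau> \<le> real k" for k \<tau>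
      using rays[of \<tau> "r k"] seq_suble[OF r, of k] that by simp
  qed
  then have "snd l \<in> asymptotic_cone \<Omega>"
    using asymptotic_coneI_closure[OF assms(1,2), of "fst l"] by force
  with r V show thesis
    by (rule that)
qed

lemma rescaling_family_asymptotic_direction:
  fixes \<Omega> :: "'a::euclidean_space set"
  assumes "open \<Omega>" "convex \<Omega>" "bounded K" "rescaling_family \<Omega> K q c"
    and "c \<in> span (asymptotic_cone \<Omega>)" "v \<in> span (asymptotic_cone \<Omega>)"
    and "q \<in> closure \<Omega>" "q + v \<in> closure \<Omega>"
  shows "v \<in> asymptotic_cone \<Omega>"
proof -
  let ?C = "asymptotic_cone \<Omega>"
  obtain Y Q \<kappa> \<kappa>' where Y: "\<And>k. Y k \<in> K" and Q: "\<And>k. linear (Q k)" "\<And>k. Q k ` ?C = ?C"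
    and maps: "\<And>k f. f \<in> closure \<Omega> \<Longrightarrow> Y k + Q k (f - (q + inverse (real (Suc k)) *\<^sub>R c)) \<in> closure \<Omega>"
    and upper: "\<And>k w. w \<in> span ?C \<Longrightarrow> inverse (real (Suc k)) * norm (Q k w) \<le> \<kappa> * norm w"
    and lower: "\<And>k w. w \<in> span ?C \<Longrightarrow> norm w \<le> \<kappa>' * inverse (real (Suc k)) * norm (Q k w)"
    using rescaling_family_seqE[OF assms(4)] by metis
  define A where "A k = (\<lambda>w. inverse (real (Suc k)) *\<^sub>R Q k w)" for k
  \<comment> \<open>the segment from q to q + v, blown up by the k-th rescaling\<close>
  have "Y k - A k c + \<tau> *\<^sub>R A k v \<in> closure \<Omega>" if "0 \<le> \<tau>" "\<tau> \<le> real k" for k \<tau>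
  proof -
    have "\<tau> * inverse (real (Suc k)) \<le> 1"
      using that by (simp add: field_simps)
    then have "(1 - \<tau> * inverse (real (Suc k))) *\<^sub>R q + (\<tau> * inverse (real (Suc k))) *\<^sub>R (q + v) \<in> closure \<Omega>"
      using assms(7,8) that(1) by (intro convexD_alt convex_closure assms(2)) auto
    from maps[OF this, of k] show ?thesis
      using Q(1) by (simp add: A_def linear_diff linear_add linear_scale algebra_simps)
  qed
  moreover have bounded_A: "bounded (range (\<lambda>k. A k w))" if "w \<in> span ?C" for w
    using upper[OF that] unfolding bounded_iff A_def by auto
  moreover have "bounded (range Y)"
    using assms(3) Y by (blast intro: bounded_subset)
  then have "bounded (range (\<lambda>k. Y k - A k c))"
    using bounded_A[OF assms(5)] by (rule bounded_minus_comp)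
  ultimately obtain r w0 where r: "strict_mono r"
    and lim: "(\<lambda>k. A (r k) v) \<longlonglongrightarrow> w0" and "w0 \<in> ?C"
    using rescaled_rays_asymptotic_limit[OF assms(1,2)] assms(6) by blast
  show ?thesis
  proof (rule closed_cone_mem_of_uniformly_injective[of ?C "\<lambda>k. A (r k)"])
    show "closed ?C"
      using assms(1,2,7) by (intro closed_asymptotic_cone) auto
    show "linear (A (r k))" for k
      using Q(1) by (simp add: A_def linear_compose_scale_right)
    show "?C \<subseteq> A (r k) ` ?C" for k
      unfolding A_def by (rule conic_subset_scaled_image[OF conic_asymptotic_cone Q(2)]) simp
    show "norm w \<le> \<kappa>' * norm (A (r k) w)" if "w \<in> span ?C" for w k
      using lower[OF that, of "r k"] by (simp add: A_def)
  qed fact+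
qed

section \<open>Quasi-homogeneous domains\<close>

locale convex_quasi_homogeneous =
  fixes \<Omega> :: "'a::euclidean_space set" and K :: "'a set" and G :: "('a \<Rightarrow> 'a) set"
  assumes open_domain: "open \<Omega>" and convex_domain: "convex \<Omega>"
    and compact_K: "compact K" and K_subset: "K \<subseteq> \<Omega>"
    and group: "affine_group_preserving G \<Omega>" and orbit_cover: "(\<Union>g\<in>G. g ` K) = \<Omega>"
begin

abbreviation AC :: "'a set" where "AC \<equiv> asymptotic_cone \<Omega>"

lemma automorphism_to_K:
  assumes "e \<in> \<Omega>"
  obtains y Q where "y \<in> K" "linear Q" "bij Q" "Q ` AC = AC"
    "\<And>z. y + Q (z - e) \<in> \<Omega> \<longleftrightarrow> z \<in> \<Omega>"
    "\<And>f. f \<in> closure \<Omega> \<Longrightarrow> y + Q (f - e) \<in> closure \<Omega>"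
proof -
  obtain h where "h \<in> G" "h e \<in> K"
    using affine_group_preserving_orbit_meets[OF group orbit_cover assms] .
  then have affine: "affine_transformation h" and invariant: "h ` \<Omega> = \<Omega>"
    using group by (auto simp: affine_group_preserving_def)
  obtain Q b where Q: "linear Q" "bij Q" and h: "h = (\<lambda>z. Q z + b)"
    using affine by (rule affine_transformationE)
  have shift: "h e + Q (z - e) = h z" for z
    using Q(1) by (simp add: h linear_diff)
  have "h z \<in> \<Omega> \<longleftrightarrow> z \<in> \<Omega>" for z
    using inj_image_mem_iff[OF affine_transformation_inj[OF affine]] invariant by metis
  moreover have "h f \<in> closure \<Omega>" if "f \<in> closure \<Omega>" for f
    using closure_affine_automorphism[OF Q(1) bij_is_inj[OF Q(2)]] invariant that
    unfolding h by blast
  ultimately show thesis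
    using that[of "h e" Q] \<open>h e \<in> K\<close> Q asymptotic_cone_affine_automorphism[OF Q] invariant
    unfolding shift by (simp add: h)
qed

end

locale fiber_minimum = convex_quasi_homogeneous +
  fixes a :: 'a and \<mu> :: real and x q :: 'a
  assumes mu_pos: "\<mu> > 0"
    and functional: "\<And>w. w \<in> asymptotic_cone \<Omega> \<Longrightarrow> \<mu> * norm w \<le> a \<bullet> w"
    and x_mem: "x \<in> \<Omega>" and q_closure: "q \<in> closure \<Omega>"
    and q_fiber: "q - x \<in> span (asymptotic_cone \<Omega>)"
    and q_min: "\<And>f. f \<in> \<Omega> \<Longrightarrow> f - x \<in> span (asymptotic_cone \<Omega>) \<Longrightarrow> a \<bullet> q \<le> a \<bullet> f"
begin

lemma functional_nonneg: "w \<in> AC \<Longrightarrow> 0 \<le> a \<bullet> w"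
  using functional[of w] mu_pos by (smt (verit) mult_nonneg_nonneg norm_ge_zero)

lemma segment_add_cone_mem:
  assumes "0 < \<epsilon>" "\<epsilon> \<le> 1" "w \<in> AC"
  shows "q + \<epsilon> *\<^sub>R (x - q) + w \<in> \<Omega>"
proof -
  have "q - \<epsilon> *\<^sub>R (q - x) \<in> interior \<Omega>"
    using x_mem open_domain
    by (intro mem_interior_closure_convex_shrink[OF convex_domain _ q_closure assms(1,2)])
      (simp add: interior_open)
  then have "q + \<epsilon> *\<^sub>R (x - q) \<in> \<Omega>"
    using open_domain by (simp add: interior_open algebra_simps)
  then show ?thesis
    using assms(3) by (rule add_asymptotic_cone_mem)
qed

text \<open>The pulled-back ball lies in the fiber, hence above the minimum a \<bullet> q; this caps
  how much P can stretch the cone.\<close>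

lemma norm_pullback_le_height:
  assumes "linear P" "P ` AC \<subseteq> AC" "r > 0" "e - x \<in> span AC"
    and ball: "\<And>u. norm u \<le> r \<Longrightarrow> e + P u \<in> \<Omega>" and "w \<in> AC"
  shows "r * \<mu> * norm (P w) \<le> a \<bullet> (e - q) * norm w"
proof (cases "w = 0")
  case True
  then show ?thesis
    using linear_0[OF assms(1)] by simp
next
  case False
  define u where "u = - (r / norm w) *\<^sub>R w"
  have "P w \<in> AC"
    using assms(2,6) by blast
  have "norm u \<le> r"
    using False assms(3) by (simp add: u_def)
  then have "e + P u \<in> \<Omega>"
    by (rule ball)
  moreover have "P u = - (r / norm w) *\<^sub>R P w"
    using assms(1) by (simp add: u_def linear_scale linear_neg)
  moreover have "(e + P u) - x \<in> span AC"
    using assms(4) span_base[OF \<open>P w \<in> AC\<close>] calculation(2)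
    by (metis add_diff_eq diff_add_eq span_add span_neg span_scale)
  ultimately have "a \<bullet> q \<le> a \<bullet> e - (r / norm w) * (a \<bullet> P w)"
    using q_min[of "e + P u"] by (simp add: inner_diff_right)
  moreover have "(r / norm w) * (\<mu> * norm (P w)) \<le> (r / norm w) * (a \<bullet> P w)"
    using functional[OF \<open>P w \<in> AC\<close>] assms(3) by (intro mult_left_mono) auto
  ultimately have "(r / norm w) * (\<mu> * norm (P w)) \<le> a \<bullet> (e - q)"
    by (simp add: inner_diff_right)
  then show ?thesis
    using False by (simp add: field_simps)
qed

end

locale rescaling_step = fiber_minimum +
  fixes c0 :: 'a and \<rho> \<epsilon> :: real and y :: 'a and Q :: "'a \<Rightarrow> 'a"
  assumes c0_mem: "c0 \<in> asymptotic_cone \<Omega>" and rho_pos: "\<rho> > 0"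
    and c0_ball: "\<And>u. u \<in> span (asymptotic_cone \<Omega>) \<Longrightarrow> norm u \<le> \<rho> \<Longrightarrow> c0 + u \<in> asymptotic_cone \<Omega>"
    and eps_pos: "0 < \<epsilon>" and eps_le_1: "\<epsilon> \<le> 1"
    and linear_Q: "linear Q" and bij_Q: "bij Q" and Q_cone: "Q ` asymptotic_cone \<Omega> = asymptotic_cone \<Omega>"
    and Q_automorphism: "\<And>z. y + Q (z - (q + \<epsilon> *\<^sub>R (x - q + c0))) \<in> \<Omega> \<longleftrightarrow> z \<in> \<Omega>"
begin

lemma norm_Q_le_on_order_interval:
  assumes R: "\<And>z. z \<in> \<Omega> \<Longrightarrow> a \<bullet> z \<le> a \<bullet> y \<Longrightarrow> norm (y - z) \<le> R"
    and "w \<in> AC" "c0 - w \<in> AC"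
  shows "norm (Q w) \<le> R / \<epsilon>"
proof -
  let ?e = "q + \<epsilon> *\<^sub>R (x - q + c0)"
  have "\<epsilon> *\<^sub>R (c0 - w) \<in> AC"
    using eps_pos assms(3) by (intro convex_cone_scaleR[OF convex_cone_asymptotic_cone]) auto
  then have "q + \<epsilon> *\<^sub>R (x - q) + \<epsilon> *\<^sub>R (c0 - w) \<in> \<Omega>"
    by (rule segment_add_cone_mem[OF eps_pos eps_le_1])
  moreover have "q + \<epsilon> *\<^sub>R (x - q) + \<epsilon> *\<^sub>R (c0 - w) = ?e - \<epsilon> *\<^sub>R w"
    by (simp add: algebra_simps)
  moreover have "y + Q ((?e - \<epsilon> *\<^sub>R w) - ?e) = y - \<epsilon> *\<^sub>R Q w"
    using linear_Q by (simp add: linear_neg linear_scale)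
  ultimately have "y - \<epsilon> *\<^sub>R Q w \<in> \<Omega>"
    using Q_automorphism by metis
  moreover have "0 \<le> a \<bullet> Q w"
    using functional_nonneg Q_cone \<open>w \<in> AC\<close> by blast
  then have "a \<bullet> (y - \<epsilon> *\<^sub>R Q w) \<le> a \<bullet> y"
    using eps_pos by (simp add: inner_diff_right)
  ultimately have "norm (y - (y - \<epsilon> *\<^sub>R Q w)) \<le> R"
    by (rule R)
  then show ?thesis
    using eps_pos by (simp add: field_simps)
qed

lemma norm_Q_le:
  assumes "\<And>z. z \<in> \<Omega> \<Longrightarrow> a \<bullet> z \<le> a \<bullet> y \<Longrightarrow> norm (y - z) \<le> R" and "w \<in> span AC"
  shows "\<epsilon> * norm (Q w) \<le> 2 * R / \<rho> * norm w"
proof -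
  have "\<epsilon> * norm (Q w) \<le> \<epsilon> * (2 * (R / \<epsilon>) / \<rho> * norm w)"
    using norm_linear_le_on_span_of_conic[OF linear_Q conic_asymptotic_cone rho_pos c0_ball
        norm_Q_le_on_order_interval[OF assms(1)] assms(2)] eps_pos
    by (intro mult_left_mono) auto
  also have "\<dots> = 2 * R / \<rho> * norm w"
    using eps_pos by simp
  finally show ?thesis .
qed

lemma inv_Q: "linear (inv Q)" "\<And>u. Q (inv Q u) = u" "\<And>u. inv Q (Q u) = u" "inv Q ` AC = AC"
  using inj_linear_imp_inv_linear[OF linear_Q bij_is_inj[OF bij_Q]] bij_Q
    image_inv_f_f[OF bij_is_inj[OF bij_Q], of AC] Q_cone
  by (auto simp: bij_is_surj surj_f_inv_f bij_is_inj)

lemma norm_inv_Q_le_on_order_interval: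
  assumes "r > 0" "cball y r \<subseteq> \<Omega>" "w \<in> AC" "c0 - w \<in> AC"
  shows "norm (inv Q w) \<le> \<epsilon> * (a \<bullet> (x - q + c0)) * (a \<bullet> c0) / (r * \<mu> * \<mu>)"
proof -
  let ?e = "q + \<epsilon> *\<^sub>R (x - q + c0)"
  have "?e - x = (1 - \<epsilon>) *\<^sub>R (q - x) + \<epsilon> *\<^sub>R c0"
    by (simp add: algebra_simps)
  then have "?e - x \<in> span AC"
    using q_fiber span_base[OF c0_mem] by (metis span_add span_scale)
  moreover have "?e + inv Q u \<in> \<Omega>" if "norm u \<le> r" for u
  proof -
    have "y + u \<in> cball y r"
      using that by (simp add: dist_norm)
    then show ?thesis
      using Q_automorphism[of "?e + inv Q u"] inv_Q(2) assms(2) by auto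
  qed
  ultimately have "r * \<mu> * norm (inv Q w) \<le> a \<bullet> (?e - q) * norm w"
    using norm_pullback_le_height[OF inv_Q(1) equalityD1[OF inv_Q(4)] assms(1)] assms(3) by blast
  also have "a \<bullet> (?e - q) = \<epsilon> * (a \<bullet> (x - q + c0))"
    by (simp add: inner_diff_right inner_add_right)
  finally have "r * \<mu> * norm (inv Q w) * \<mu> \<le> \<epsilon> * (a \<bullet> (x - q + c0)) * (\<mu> * norm w)"
    using mu_pos by (simp add: mult_right_mono mult.commute mult.left_commute)
  also have "\<dots> \<le> \<epsilon> * (a \<bullet> (x - q + c0)) * (a \<bullet> c0)"
  proof (rule mult_left_mono)
    show "\<mu> * norm w \<le> a \<bullet> c0"
      using functional[OF assms(3)] functional_nonneg[OF assms(4)] by (simp add: inner_diff_right)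
    show "0 \<le> \<epsilon> * (a \<bullet> (x - q + c0))"
      using eps_pos q_min[OF x_mem] functional_nonneg[OF c0_mem]
      by (simp add: inner_add_right inner_diff_right span_zero)
  qed
  finally show ?thesis
    using assms(1) mu_pos by (simp add: field_simps)
qed

lemma norm_le_norm_Q:
  assumes "r > 0" "cball y r \<subseteq> \<Omega>" "w \<in> span AC"
  shows "norm w \<le> 2 * (a \<bullet> (x - q + c0) * (a \<bullet> c0) / (r * \<mu> * \<mu>)) / \<rho> * \<epsilon> * norm (Q w)"
proof -
  have "Q ` span AC = span AC"
    by (metis span_linear_image[OF linear_Q] Q_cone)
  then have "Q w \<in> span AC"
    using assms(3) by blast
  then have "norm (inv Q (Q w))
      \<le> 2 * (\<epsilon> * (a \<bullet> (x - q + c0)) * (a \<bullet> c0) / (r * \<mu> * \<mu>)) / \<rho> * norm (Q w)"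
    using norm_linear_le_on_span_of_conic[OF inv_Q(1) conic_asymptotic_cone rho_pos c0_ball
        norm_inv_Q_le_on_order_interval[OF assms(1,2)]] by blast
  then show ?thesis
    by (simp add: inv_Q(3) mult.commute mult.left_commute)
qed

end

context fiber_minimum
begin

lemma rescaling_at_scale:
  assumes c0: "c0 \<in> AC" "\<rho> > 0" "\<And>u. u \<in> span AC \<Longrightarrow> norm u \<le> \<rho> \<Longrightarrow> c0 + u \<in> AC"
    and r: "r > 0" "\<And>y. y \<in> K \<Longrightarrow> cball y r \<subseteq> \<Omega>"
    and R: "\<And>y z. y \<in> K \<Longrightarrow> z \<in> \<Omega> \<Longrightarrow> a \<bullet> z \<le> a \<bullet> y \<Longrightarrow> norm (y - z) \<le> R"
    and \<epsilon>: "0 < \<epsilon>" "\<epsilon> \<le> 1"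
  shows "\<exists>y Q. y \<in> K \<and> linear Q \<and> Q ` AC = AC
      \<and> (\<forall>f\<in>closure \<Omega>. y + Q (f - (q + \<epsilon> *\<^sub>R (x - q + c0))) \<in> closure \<Omega>)
      \<and> (\<forall>w\<in>span AC. \<epsilon> * norm (Q w) \<le> 2 * R / \<rho> * norm w
           \<and> norm w \<le> 2 * (a \<bullet> (x - q + c0) * (a \<bullet> c0) / (r * \<mu> * \<mu>)) / \<rho> * \<epsilon> * norm (Q w))"
proof -
  let ?e = "q + \<epsilon> *\<^sub>R (x - q + c0)"
  have "\<epsilon> *\<^sub>R c0 \<in> AC"
    using \<epsilon>(1) c0(1) by (intro convex_cone_scaleR[OF convex_cone_asymptotic_cone]) auto
  then have "q + \<epsilon> *\<^sub>R (x - q) + \<epsilon> *\<^sub>R c0 \<in> \<Omega>"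
    by (rule segment_add_cone_mem[OF \<epsilon>])
  then have "?e \<in> \<Omega>"
    by (simp add: algebra_simps)
  then obtain y Q where y: "y \<in> K" and Q: "linear Q" "bij Q" "Q ` AC = AC"
    and invariant: "\<And>z. y + Q (z - ?e) \<in> \<Omega> \<longleftrightarrow> z \<in> \<Omega>"
    and invariant_closure: "\<And>f. f \<in> closure \<Omega> \<Longrightarrow> y + Q (f - ?e) \<in> closure \<Omega>"
    using automorphism_to_K by blast
  interpret rescaling_step \<Omega> K G a \<mu> x q c0 \<rho> \<epsilon> y Q
    using c0 \<epsilon> Q invariant
    by (intro rescaling_step.intro fiber_minimum.intro convex_quasi_homogeneous_axioms
        fiber_minimum_axioms rescaling_step_axioms.intro) auto
  show ?thesis
    using y linear_Q Q_cone invariant_closure norm_Q_le[OF R[OF y]] norm_le_norm_Q[OF r(1) r(2)[OF y]]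
    by (intro exI[of _ y] exI[of _ Q]) auto
qed

lemma rescaling_family_exists:
  obtains c where "c \<in> span AC" "rescaling_family \<Omega> K q c"
proof -
  obtain c0 \<rho> where c0: "c0 \<in> AC" "\<rho> > 0" "\<And>u. u \<in> span AC \<Longrightarrow> norm u \<le> \<rho> \<Longrightarrow> c0 + u \<in> AC"
    using convex_cone_relative_interior_ball[OF convex_cone_asymptotic_cone[of \<Omega>]] by blast
  obtain r where "r > 0" and "(\<Union>y\<in>K. cball y r) \<subseteq> \<Omega>"
    by (rule compact_subset_open_imp_cball_epsilon_subset[OF compact_K open_domain K_subset])
  then have r: "r > 0" "\<And>y. y \<in> K \<Longrightarrow> cball y r \<subseteq> \<Omega>"
    by auto
  obtain R0 where R0: "\<forall>y\<in>K. norm y \<le> R0"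
    using compact_imp_bounded[OF compact_K] unfolding bounded_iff ..
  obtain R1 where R1: "\<forall>z\<in>{z \<in> closure \<Omega>. a \<bullet> z \<le> norm a * R0}. norm z \<le> R1"
    using bounded_sublevel_closure[OF open_domain convex_domain mu_pos functional]
    unfolding bounded_iff ..
  have R: "norm (y - z) \<le> R0 + R1" if "y \<in> K" "z \<in> \<Omega>" "a \<bullet> z \<le> a \<bullet> y" for y z
  proof -
    have "a \<bullet> y \<le> norm a * R0"
      using norm_cauchy_schwarz[of a y] R0 that(1) by (meson mult_left_mono norm_ge_zero order_trans)
    then have "norm z \<le> R1"
      using R1 that(2,3) closure_subset by force
    then show ?thesis
      using norm_triangle_ineq4[of y z] R0 that(1) by fastforce
  qed
  have "rescaling_family \<Omega> K q (x - q + c0)"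
    unfolding rescaling_family_def
    by (rule exI, rule exI, intro allI impI, rule rescaling_at_scale[OF c0 r R]) auto
  moreover have "x - q + c0 \<in> span AC"
    using span_add[OF span_neg[OF q_fiber] span_base[OF c0(1)]] by simp
  ultimately show thesis
    by (rule that[rotated])
qed

end

context convex_quasi_homogeneous
begin

lemma fiber_minimum_exists:
  assumes "\<mu> > 0" "\<And>w. w \<in> AC \<Longrightarrow> \<mu> * norm w \<le> a \<bullet> w" "x \<in> \<Omega>"
  obtains q where "q \<in> closure (\<Omega> \<inter> (\<lambda>v. x + v) ` span AC)" "fiber_minimum \<Omega> K G a \<mu> x q"
proof -
  let ?F = "closure (\<Omega> \<inter> (\<lambda>v. x + v) ` span AC)"
  have fiber: "f \<in> closure \<Omega>" "f - x \<in> span AC" if "f \<in> ?F" for f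
    using closure_fiber_subset[OF subspace_span that] by auto
  have mem_fiber: "f \<in> ?F" if "f \<in> \<Omega>" "f - x \<in> span AC" for f
    using that closure_subset by (force intro: image_eqI[of _ _ "f - x"])
  have "bounded {f \<in> ?F. a \<bullet> f \<le> a \<bullet> x}"
    using bounded_sublevel_closure[OF open_domain convex_domain assms(1,2)]
    by (rule bounded_subset) (auto dest: fiber)
  then obtain q where "q \<in> ?F" and q_min: "\<And>f. f \<in> ?F \<Longrightarrow> a \<bullet> q \<le> a \<bullet> f"
    using closed_inner_attains_min[OF closed_closure mem_fiber[OF assms(3)]] by (auto simp: span_zero)
  have "fiber_minimum \<Omega> K G a \<mu> x q"
  proof unfold_locales
    show "a \<bullet> q \<le> a \<bullet> f" if "f \<in> \<Omega>" "f - x \<in> span AC" for f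
      using q_min mem_fiber that by blast
  qed (use assms fiber[OF \<open>q \<in> ?F\<close>] in auto)
  with \<open>q \<in> ?F\<close> show thesis
    by (rule that)
qed

lemma closure_fiber_eq_translate_cone:
  assumes "properly_convex \<Omega>" "x \<in> \<Omega>"
  shows "\<exists>p. closure (\<Omega> \<inter> (\<lambda>v. x + v) ` span AC) = (\<lambda>u. p + u) ` AC"
proof -
  let ?F = "closure (\<Omega> \<inter> (\<lambda>v. x + v) ` span AC)"
  have "\<Omega> \<noteq> {}"
    using assms(2) by blast
  have "closed AC"
    by (rule closed_asymptotic_cone[OF open_domain convex_domain \<open>\<Omega> \<noteq> {}\<close>])
  then obtain a \<mu> where "\<mu> > 0" and functional: "\<And>w. w \<in> AC \<Longrightarrow> \<mu> * norm w \<le> a \<bullet> w"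
    using pointed_convex_cone_positive_functional[OF _ convex_cone_asymptotic_cone
          asymptotic_cone_pointed[OF assms(1) \<open>\<Omega> \<noteq> {}\<close>]] by metis
  then obtain q where "q \<in> ?F" and minimum: "fiber_minimum \<Omega> K G a \<mu> x q"
    using fiber_minimum_exists[OF _ _ assms(2)] by metis
  interpret fiber_minimum \<Omega> K G a \<mu> x q
    by (fact minimum)
  obtain c where "c \<in> span AC" "rescaling_family \<Omega> K q c"
    by (rule rescaling_family_exists)
  have "f - q \<in> AC" if "f \<in> ?F" for f
  proof (rule rescaling_family_asymptotic_direction[OF open_domain convex_domain
        compact_imp_bounded[OF compact_K] \<open>rescaling_family \<Omega> K q c\<close> \<open>c \<in> span AC\<close>])
    show "f - q \<in> span AC"
      using span_diff[OF closure_fiber_subset(2)[OF subspace_span that] q_fiber] by simp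
    show "q + (f - q) \<in> closure \<Omega>"
      using closure_fiber_subset(1)[OF subspace_span that] by simp
  qed (rule q_closure)
  moreover have "q + u \<in> ?F" if "u \<in> AC" for u
    using closure_fiber_add_asymptotic_cone[OF subspace_span span_superset \<open>q \<in> ?F\<close> that] .
  ultimately have "?F = (\<lambda>u. q + u) ` AC"
    by (auto intro: image_eqI[of _ _ "f - q" for f])
  then show ?thesis
    by blast
qed

end

theorem theorem4p3:
  fixes \<Omega> :: "'a::euclidean_space set"
  assumes "affine_domain \<Omega>"
    and "properly_convex \<Omega>"
    and "quasi_homogeneous \<Omega>"
  shows "\<forall>x\<in>\<Omega>. \<exists>p. closure (\<Omega> \<inter> (\<lambda>v. x + v) ` span (asymptotic_cone \<Omega>))
                     = (\<lambda>u. p + u) ` asymptotic_cone \<Omega>"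
proof
  fix x
  assume "x \<in> \<Omega>"
  obtain K G where "compact K" "K \<subseteq> \<Omega>" "affine_group_preserving G \<Omega>" "(\<Union>g\<in>G. g ` K) = \<Omega>"
    using assms(3) unfolding quasi_homogeneous_def by blast
  then interpret convex_quasi_homogeneous \<Omega> K G
    using assms(1,2) by unfold_locales (auto simp: affine_domain_def properly_convex_def)
  show "\<exists>p. closure (\<Omega> \<inter> (\<lambda>v. x + v) ` span (asymptotic_cone \<Omega>)) = (\<lambda>u. p + u) ` asymptotic_cone \<Omega>"
    by (rule closure_fiber_eq_translate_cone[OF assms(2) \<open>x \<in> \<Omega>\<close>])
qed

end
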